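(* Let $p,p',p''\geq 5$ be three distinct primes. Then the set of integers $x$ such that for each $q\in\{p,p',p''\}$ there is an odd integer $k_q$ with $x=k_qq+4N(q/6)$ or $x=k_qq-4N(q/6)$ (the triple non-ranks of $p,p',p''$) is the union of exactly $2^3=8$ pairwise distinct arithmetic progressions (residue classes) with common difference $2pp'p''$.
   Context: $N(x)$ denotes the integer nearest to the real number $x$. *)

theory Defs
  imports Complex_Main "HOL-Computational_Algebra.Primes" "HOL-Number_Theory.Cong"
begin

(* N(x): the integer nearest to the real number x (ties rounded up; ties never
   occur for x = q/6 with q a prime >= 5). *)
definition nearest_int :: "real \<Rightarrow> int" where
  "nearest_int x = round x"

definition non_rank :: "int \<Rightarrow> int \<Rightarrow> bool" where
  "non_rank q x \<longleftrightarrow> (\<exists>k::int. odd k \<and>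
      (x = k * q + 4 * nearest_int (real_of_int q / 6) \<or>
       x = k * q - 4 * nearest_int (real_of_int q / 6)))"

end

theory Submission
  imports Defs
begin

text \<open>For a prime \<open>q \<ge> 5\<close> put \<open>e = 4 N(q/6)\<close>. Since \<open>q\<close> is odd, \<open>x = kq \<plusminus> e\<close> with \<open>k\<close> odd says
  exactly that \<open>x\<close> is odd and \<open>x \<equiv> \<plusminus>e (mod q)\<close>; and \<open>e \<not>\<equiv> -e (mod q)\<close> because
  \<open>0 < N(q/6) < q\<close>. So the triple non-ranks form a set invariant under shifts by
  \<open>M = 2pp'p''\<close>, and by the Chinese remainder theorem it meets \<open>{0..<M}\<close> in
  \<open>1 \<cdot> 2 \<cdot> 2 \<cdot> 2 = 8\<close> residues.\<close>

definition periodic_mod :: "int \<Rightarrow> (int \<Rightarrow> bool) \<Rightarrow> bool" where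
  "periodic_mod m P \<longleftrightarrow> (\<forall>x. P (x mod m) \<longleftrightarrow> P x)"

lemma periodic_mod_dvd:
  assumes "periodic_mod m P" "m dvd k"
  shows "periodic_mod k P"
  using assms unfolding periodic_mod_def by (metis mod_mod_cancel)

lemma periodic_mod_conj:
  assumes "periodic_mod m P" "periodic_mod n Q"
  shows "periodic_mod (m * n) (\<lambda>x. P x \<and> Q x)"
  using periodic_mod_dvd[OF assms(1), of "m * n"] periodic_mod_dvd[OF assms(2), of "m * n"]
  unfolding periodic_mod_def by simp

lemma periodic_mod_odd: "periodic_mod 2 odd"
  unfolding periodic_mod_def by (simp add: odd_iff_mod_2_eq_one)

lemma periodic_mod_cong_disj: "periodic_mod q (\<lambda>x. [x = u] (mod q) \<or> [x = v] (mod q))"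
  unfolding periodic_mod_def by simp

lemma periodic_mod_eq_residue_classes:
  assumes "m > 0" "periodic_mod m P"
  shows "{x. P x} = {x. \<exists>a\<in>{a\<in>{0..<m}. P a}. [x = a] (mod m)}"
proof -
  have "P x \<longleftrightarrow> (\<exists>a\<in>{a\<in>{0..<m}. P a}. [x = a] (mod m))" for x
  proof
    assume "P x"
    then have "x mod m \<in> {a\<in>{0..<m}. P a}"
      using assms by (simp add: periodic_mod_def)
    then show "\<exists>a\<in>{a\<in>{0..<m}. P a}. [x = a] (mod m)"
      by (auto simp: cong_def)
  next
    assume "\<exists>a\<in>{a\<in>{0..<m}. P a}. [x = a] (mod m)"
    then obtain a where "P a" "x mod m = a mod m"
      by (auto simp: cong_def)
    then show "P x"
      using assms(2) unfolding periodic_mod_def by metis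
  qed
  then show ?thesis
    by blast
qed

lemma card_residues_conj:
  fixes m n :: int
  assumes "coprime m n" "m > 0" "n > 0" "periodic_mod m P" "periodic_mod n Q"
  shows "card {a\<in>{0..<m * n}. P a \<and> Q a} = card {a\<in>{0..<m}. P a} * card {a\<in>{0..<n}. Q a}"
proof -
  let ?crt = "\<lambda>a. (a mod m, a mod n)"
  have "bij_betw ?crt {a\<in>{0..<m * n}. P a \<and> Q a} ({a\<in>{0..<m}. P a} \<times> {a\<in>{0..<n}. Q a})"
  proof (rule bij_betwI')
    fix a b assume "a \<in> {a\<in>{0..<m * n}. P a \<and> Q a}" "b \<in> {a\<in>{0..<m * n}. P a \<and> Q a}"
    then have reduced: "a mod (m * n) = a" "b mod (m * n) = b"
      by (auto intro: mod_pos_pos_trivial)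
    show "?crt a = ?crt b \<longleftrightarrow> a = b"
    proof
      assume "?crt a = ?crt b"
      then have "[a = b] (mod m)" "[a = b] (mod n)"
        unfolding cong_def by simp_all
      then have "[a = b] (mod m * n)"
        using assms(1) by (rule coprime_cong_mult)
      then show "a = b"
        using reduced unfolding cong_def by metis
    qed simp
  next
    fix a assume "a \<in> {a\<in>{0..<m * n}. P a \<and> Q a}"
    then show "?crt a \<in> {a\<in>{0..<m}. P a} \<times> {a\<in>{0..<n}. Q a}"
      using assms(2-5) unfolding periodic_mod_def by simp
  next
    fix r assume r: "r \<in> {a\<in>{0..<m}. P a} \<times> {a\<in>{0..<n}. Q a}"
    obtain y where y: "y mod m = fst r mod m" "y mod n = snd r mod n"
      using binary_chinese_remainder_int[OF assms(1)] unfolding cong_def by blast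
    define a where "a = y mod (m * n)"
    have "a mod m = y mod m" "a mod n = y mod n"
      unfolding a_def by (simp_all add: mod_mod_cancel)
    with y r have crt_a: "?crt a = r"
      by (auto simp: prod_eq_iff)
    have "a \<in> {0..<m * n}"
      unfolding a_def using assms(2,3) by simp
    moreover have "P a" "Q a"
      using assms(4,5) r crt_a unfolding periodic_mod_def by auto
    ultimately show "\<exists>a\<in>{a\<in>{0..<m * n}. P a \<and> Q a}. r = ?crt a"
      using crt_a by auto
  qed
  then show ?thesis
    by (simp add: bij_betw_same_card card_cartesian_product)
qed

lemma card_odd_residues_mod_2: "card {a\<in>{0..<2::int}. odd a} = 1"
proof -
  have "{a\<in>{0..<2::int}. odd a} = {1}"
    by (auto simp: odd_iff_mod_2_eq_one)
  then show ?thesis by simp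
qed

lemma card_residues_cong_disj:
  fixes q u v :: int
  assumes "q > 0" "\<not> [u = v] (mod q)"
  shows "card {a\<in>{0..<q}. [a = u] (mod q) \<or> [a = v] (mod q)} = 2"
proof -
  have "{a\<in>{0..<q}. [a = u] (mod q) \<or> [a = v] (mod q)} = {u mod q, v mod q}"
    using assms(1) by (auto simp: cong_def)
  moreover have "u mod q \<noteq> v mod q"
    using assms(2) by (simp add: cong_def)
  ultimately show ?thesis by simp
qed

lemma nearest_int_sixth_bounds:
  fixes q :: int
  assumes "q \<ge> 5"
  shows "0 < nearest_int (q / 6)" "nearest_int (q / 6) < q"
proof -
  have "q / 6 - 1/2 \<le> real_of_int (nearest_int (q / 6))"
       "real_of_int (nearest_int (q / 6)) \<le> q / 6 + 1/2"
    unfolding nearest_int_def by (rule of_int_round_ge, rule of_int_round_le)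
  moreover have "real_of_int q \<ge> 5"
    using assms by simp
  ultimately have "0 < real_of_int (nearest_int (q / 6))" "real_of_int (nearest_int (q / 6)) < q"
    by linarith+
  then show "0 < nearest_int (q / 6)" "nearest_int (q / 6) < q"
    by simp_all
qed

lemma four_nearest_int_sixth_not_cong_neg:
  fixes q :: int
  assumes "prime q" "q \<ge> 5"
  shows "\<not> [4 * nearest_int (q / 6) = - (4 * nearest_int (q / 6))] (mod q)"
proof
  let ?c = "nearest_int (q / 6)"
  assume "[4 * ?c = - (4 * ?c)] (mod q)"
  then have "q dvd 2 ^ 3 * ?c"
    by (simp add: cong_iff_dvd_diff)
  then have "q dvd 2 ^ 3 \<or> q dvd ?c"
    using assms(1) prime_dvd_mult_iff by blast
  then have "q dvd 2 \<or> q dvd ?c"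
    using assms(1) prime_dvd_power by blast
  moreover have "\<not> q dvd 2"
    using assms(2) zdvd_imp_le[of q 2] by auto
  moreover have "\<not> q dvd ?c"
    using nearest_int_sixth_bounds[OF assms(2)] zdvd_imp_le by fastforce
  ultimately show False by blast
qed

definition non_rank_residue :: "int \<Rightarrow> int \<Rightarrow> bool" where
  "non_rank_residue q x \<longleftrightarrow>
     [x = 4 * nearest_int (q / 6)] (mod q) \<or> [x = - (4 * nearest_int (q / 6))] (mod q)"

lemma non_rank_iff_odd_residue:
  fixes q x :: int
  assumes "odd q"
  shows "non_rank q x \<longleftrightarrow> odd x \<and> non_rank_residue q x"
proof -
  define e where "e = 4 * nearest_int (q / 6)"
  have "(\<exists>k. odd k \<and> (x = k * q + e \<or> x = k * q - e)) \<longleftrightarrow>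
        odd x \<and> ([x = e] (mod q) \<or> [x = - e] (mod q))"
  proof
    assume "\<exists>k. odd k \<and> (x = k * q + e \<or> x = k * q - e)"
    then show "odd x \<and> ([x = e] (mod q) \<or> [x = - e] (mod q))"
      using assms unfolding e_def by (auto simp: cong_iff_dvd_diff)
  next
    assume x: "odd x \<and> ([x = e] (mod q) \<or> [x = - e] (mod q))"
    then obtain k where k: "x - e = q * k \<or> x + e = q * k"
      by (auto simp: cong_iff_dvd_diff elim!: dvdE)
    have "odd (x - e)" "odd (x + e)"
      using x unfolding e_def by auto
    with k have "odd (q * k)"
      by metis
    then have "odd k"
      by simp
    with k show "\<exists>k. odd k \<and> (x = k * q + e \<or> x = k * q - e)"
      by (auto simp: algebra_simps)
  qed
  then show ?thesis
    unfolding non_rank_def non_rank_residue_def e_def .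
qed

lemma periodic_mod_non_rank_residue: "periodic_mod q (non_rank_residue q)"
  unfolding non_rank_residue_def by (rule periodic_mod_cong_disj)

lemma card_non_rank_residues:
  fixes q :: int
  assumes "prime q" "q \<ge> 5"
  shows "card {a\<in>{0..<q}. non_rank_residue q a} = 2"
  unfolding non_rank_residue_def using assms
  by (intro card_residues_cong_disj four_nearest_int_sixth_not_cong_neg) simp_all

lemma card_triple_non_rank_residues:
  fixes p p' p'' :: int
  assumes "prime p" "prime p'" "prime p''"
    and "p \<ge> 5" "p' \<ge> 5" "p'' \<ge> 5"
    and "p \<noteq> p'" "p \<noteq> p''" "p' \<noteq> p''"
  shows "card {a\<in>{0..<2*p*p'*p''}.
    ((odd a \<and> non_rank_residue p a) \<and> non_rank_residue p' a) \<and> non_rank_residue p'' a} = 8"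
proof -
  let ?R = non_rank_residue
  have coprime: "coprime 2 p" "coprime (2 * p) p'" "coprime (2 * p * p') p''"
    using assms by (auto simp: primes_coprime prime_odd_int)
  have pos: "(0::int) < 2" "0 < p" "0 < p'" "0 < p''" "0 < 2 * p" "0 < 2 * p * p'"
    using assms(4-6) by simp_all
  have periodic: "periodic_mod (2 * p) (\<lambda>x. odd x \<and> ?R p x)"
    "periodic_mod (2 * p * p') (\<lambda>x. (odd x \<and> ?R p x) \<and> ?R p' x)"
    by (intro periodic_mod_conj periodic_mod_odd periodic_mod_non_rank_residue)+
  note card_conj = card_residues_conj[OF _ _ _ _ periodic_mod_non_rank_residue]
  have "card {a\<in>{0..<2*p*p'*p''}. ((odd a \<and> ?R p a) \<and> ?R p' a) \<and> ?R p'' a}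
      = card {a\<in>{0..<2::int}. odd a} * card {a\<in>{0..<p}. ?R p a}
        * card {a\<in>{0..<p'}. ?R p' a} * card {a\<in>{0..<p''}. ?R p'' a}"
    by (simp only: card_conj[OF coprime(3) pos(6) pos(4) periodic(2)]
        card_conj[OF coprime(2) pos(5) pos(3) periodic(1)]
        card_conj[OF coprime(1) pos(1) pos(2) periodic_mod_odd])
  also have "\<dots> = 8"
    by (simp only: card_odd_residues_mod_2 card_non_rank_residues[OF assms(1,4)]
        card_non_rank_residues[OF assms(2,5)] card_non_rank_residues[OF assms(3,6)])
  finally show ?thesis .
qed

theorem theorem3p11:
  fixes p p' p'' :: int
  assumes "prime p" "prime p'" "prime p''"
    and "p \<ge> 5" "p' \<ge> 5" "p'' \<ge> 5"
    and "p \<noteq> p'" "p \<noteq> p''" "p' \<noteq> p''"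
  shows "\<exists>A :: int set. A \<subseteq> {0..<2*p*p'*p''} \<and> card A = 8 \<and>
           {x::int. \<forall>q\<in>{p, p', p''}. non_rank q x}
             = {x. \<exists>a\<in>A. [x = a] (mod (2*p*p'*p''))}"
proof -
  let ?R = non_rank_residue
  let ?P = "\<lambda>x. ((odd x \<and> ?R p x) \<and> ?R p' x) \<and> ?R p'' x"
  have "odd p" "odd p'" "odd p''"
    using assms by (simp_all add: prime_odd_int)
  then have "{x. \<forall>q\<in>{p, p', p''}. non_rank q x} = {x. ?P x}"
    by (simp add: non_rank_iff_odd_residue) blast
  also have "\<dots> = {x. \<exists>a\<in>{a\<in>{0..<2*p*p'*p''}. ?P a}. [x = a] (mod (2*p*p'*p''))}"
    by (rule periodic_mod_eq_residue_classes, use assms(4-6) in simp)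
      (intro periodic_mod_conj periodic_mod_odd periodic_mod_non_rank_residue)
  finally have "{x. \<forall>q\<in>{p, p', p''}. non_rank q x}
      = {x. \<exists>a\<in>{a\<in>{0..<2*p*p'*p''}. ?P a}. [x = a] (mod (2*p*p'*p''))}" .
  then show ?thesis
    by (intro exI[of _ "{a\<in>{0..<2*p*p'*p''}. ?P a}"] conjI Collect_subset
        card_triple_non_rank_residues[OF assms])
qed

end
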